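(* Let $X,Y,Z$ be Banach spaces and $T:X\oplus_\infty Y\to Z$ a Lipschitz map with $T(0)=0$. Then for every $\varepsilon>0$ there exist $u=(x_1,y_1)$, $v=(x_2,y_2)\in X\oplus_\infty Y$ with $u\ne v$ and $\|u-v\|=\|x_1-x_2\|$ such that $\|Tu-Tv\|\ge(\|T\|_L-\varepsilon)\|u-v\|$.
   Context: $X\oplus_\infty Y$ is $X\times Y$ with norm $\|(x,y)\|=\max\{\|x\|,\|y\|\}$. $\|T\|_L=\sup\{\|Tu-Tv\|/\|u-v\|: u\neq v\}$. *)

theory Defs
  imports "HOL-Analysis.Analysis"
begin

definition norm_inf :: "'a::real_normed_vector \<times> 'b::real_normed_vector \<Rightarrow> real" where
  "norm_inf u = max (norm (fst u)) (norm (snd u))"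

definition lipschitz_inf :: "('a::real_normed_vector \<times> 'b::real_normed_vector \<Rightarrow> 'c::real_normed_vector) \<Rightarrow> bool" where
  "lipschitz_inf T \<longleftrightarrow> (\<exists>L. \<forall>u v. norm (T u - T v) \<le> L * norm_inf (u - v))"

definition lip_const_inf :: "('a::real_normed_vector \<times> 'b::real_normed_vector \<Rightarrow> 'c::real_normed_vector) \<Rightarrow> real" where
  "lip_const_inf T = (SUP p \<in> {(u, v). u \<noteq> v}. norm (T (fst p) - T (snd p)) / norm_inf (fst p - snd p))"

end

theory Submission
  imports Defs
begin

(* Write r(u,v) = \<parallel>Tu - Tv\<parallel> / \<parallel>u - v\<parallel> for the difference quotient.  If a point w lies
   metrically between u and v (\<parallel>u - w\<parallel> + \<parallel>w - v\<parallel> = \<parallel>u - v\<parallel>), the triangle inequality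
   forces r(u,w) \<ge> r(u,v) or r(w,v) \<ge> r(u,v).  If u - v = (a,b) with \<parallel>a\<parallel> < \<parallel>b\<parallel>, one
   splits (a,b) into two pieces (c1 e, (c1/\<parallel>b\<parallel>) b) and (-c2 e, (c2/\<parallel>b\<parallel>) b), where e is a
   unit vector of X pointing along a and c1, c2 = (\<parallel>b\<parallel> \<plusminus> \<parallel>a\<parallel>)/2; both pieces are
   X-dominated and their max-norms add up to \<parallel>b\<parallel>.  Hence every difference quotient is
   dominated by the quotient of an X-dominated pair, and picking a pair whose
   quotient exceeds lip_const_inf T - \<epsilon> (possible since the supremum is finite by
   the Lipschitz assumption) gives the theorem. *)

lemma norm_inf_pos: "w \<noteq> 0 \<Longrightarrow> norm_inf w > 0"
  unfolding norm_inf_def by (cases w) (auto simp: max_def zero_prod_def)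

definition diff_quot ::
    "('a::real_normed_vector \<times> 'b::real_normed_vector \<Rightarrow> 'c::real_normed_vector)
      \<Rightarrow> 'a \<times> 'b \<Rightarrow> 'a \<times> 'b \<Rightarrow> real" where
  "diff_quot T u v = norm (T u - T v) / norm_inf (u - v)"

definition x_dominated :: "'a::real_normed_vector \<times> 'b::real_normed_vector \<Rightarrow> bool" where
  "x_dominated w \<longleftrightarrow> norm_inf w = norm (fst w)"

lemma diff_quot_split:
  fixes T :: "'a::real_normed_vector \<times> 'b::real_normed_vector \<Rightarrow> 'c::real_normed_vector"
  assumes between: "norm_inf (u - w) + norm_inf (w - v) = norm_inf (u - v)"
    and "u \<noteq> w" "w \<noteq> v"
  shows "diff_quot T u w \<ge> diff_quot T u v \<or> diff_quot T w v \<ge> diff_quot T u v"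
proof (rule ccontr)
  define q where "q = diff_quot T u v"
  have pos: "norm_inf (u - w) > 0" "norm_inf (w - v) > 0"
    using assms by (auto intro!: norm_inf_pos)
  assume "\<not> ?thesis"
  then have "norm (T u - T w) < q * norm_inf (u - w)" "norm (T w - T v) < q * norm_inf (w - v)"
    using pos by (auto simp: q_def diff_quot_def not_le pos_divide_less_eq)
  then have "norm (T u - T w) + norm (T w - T v) < q * norm_inf (u - v)"
    using between by (metis add_strict_mono distrib_left)
  also have "q * norm_inf (u - v) \<le> norm (T u - T v)"
    by (simp add: q_def diff_quot_def)
  also have "\<dots> \<le> norm (T u - T w) + norm (T w - T v)"
    using norm_triangle_ineq[of "T u - T w" "T w - T v"] by simp
  finally show False by simp
qed

lemma split_into_x_dominated:
  fixes a :: "'a::real_normed_vector" and b :: "'b::real_normed_vector"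
  assumes X: "\<exists>x::'a. x \<noteq> 0" and ab: "norm a < norm b"
  shows "\<exists>p q. p + q = (a, b) \<and> p \<noteq> 0 \<and> q \<noteq> 0 \<and> x_dominated p \<and> x_dominated q
           \<and> norm_inf p + norm_inf q = norm_inf (a, b)"
proof -
  define r where "r = norm b"
  define \<alpha> where "\<alpha> = norm a"
  have r: "r > 0" and \<alpha>: "0 \<le> \<alpha>" "\<alpha> < r"
    using ab by (auto simp: r_def \<alpha>_def)
  obtain e :: 'a where e: "norm e = 1" and ae: "a = \<alpha> *\<^sub>R e"
  proof (cases "a = 0")
    case True
    obtain x :: 'a where "x \<noteq> 0" using X by blast
    then show ?thesis using that[of "x /\<^sub>R norm x"] True by (simp add: \<alpha>_def)
  next
    case False
    then show ?thesis using that[of "a /\<^sub>R norm a"] by (simp add: \<alpha>_def)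
  qed
  define c1 where "c1 = (r + \<alpha>) / 2"
  define c2 where "c2 = (r - \<alpha>) / 2"
  have c: "c1 > 0" "c2 > 0" "c1 \<le> r" "c2 \<le> r" "c1 - c2 = \<alpha>" "c1 + c2 = r"
    using \<alpha> by (auto simp: c1_def c2_def field_simps)
  define p where "p = (c1 *\<^sub>R e, (c1 / r) *\<^sub>R b)"
  define q where "q = ((- c2) *\<^sub>R e, (c2 / r) *\<^sub>R b)"
  have "p + q = ((c1 - c2) *\<^sub>R e, ((c1 + c2) / r) *\<^sub>R b)"
    by (simp add: p_def q_def algebra_simps add_divide_distrib)
  then have sum: "p + q = (a, b)"
    using c r by (simp add: ae)
  have norms: "norm_inf p = c1" "norm (fst p) = c1" "norm_inf q = c2" "norm (fst q) = c2"
    using c r e by (auto simp: p_def q_def norm_inf_def r_def)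
  have "norm_inf (a, b) = r"
    using ab by (simp add: norm_inf_def r_def)
  then show ?thesis
    using sum norms c by (intro exI[of _ p] exI[of _ q]) (auto simp: x_dominated_def)
qed

lemma diff_quot_x_dominated_pair:
  fixes T :: "'a::real_normed_vector \<times> 'b::real_normed_vector \<Rightarrow> 'c::real_normed_vector"
  assumes X: "\<exists>x::'a. x \<noteq> 0" and "u \<noteq> v"
  shows "\<exists>u' v'. u' \<noteq> v' \<and> x_dominated (u' - v') \<and> diff_quot T u' v' \<ge> diff_quot T u v"
proof (cases "norm (snd (u - v)) \<le> norm (fst (u - v))")
  case True
  then show ?thesis
    using \<open>u \<noteq> v\<close> by (intro exI[of _ u] exI[of _ v]) (auto simp: x_dominated_def norm_inf_def)
next
  case False
  then obtain p q where pq: "p + q = (fst (u - v), snd (u - v))" "p \<noteq> 0" "q \<noteq> 0"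
      "x_dominated p" "x_dominated q" "norm_inf p + norm_inf q = norm_inf (u - v)"
    using split_into_x_dominated[OF X] by (metis not_le prod.collapse)
  define w where "w = v + q"
  have "u - w = p" "w - v = q"
    using pq(1) by (auto simp: w_def algebra_simps prod_eq_iff)
  then have "diff_quot T u w \<ge> diff_quot T u v \<or> diff_quot T w v \<ge> diff_quot T u v"
    using pq by (intro diff_quot_split) auto
  then show ?thesis
    using pq \<open>u - w = p\<close> \<open>w - v = q\<close> by (metis right_minus_eq)
qed

lemma lip_const_inf_approx:
  fixes T :: "'a::real_normed_vector \<times> 'b::real_normed_vector \<Rightarrow> 'c::real_normed_vector"
  assumes X: "\<exists>x::'a. x \<noteq> 0" and lip: "lipschitz_inf T" and "c < lip_const_inf T"
  shows "\<exists>u v. u \<noteq> v \<and> c < diff_quot T u v"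
proof -
  define S where "S = {(u, v). u \<noteq> (v :: 'a \<times> 'b)}"
  define f where "f = (\<lambda>p. diff_quot T (fst p) (snd p))"
  obtain L where L: "\<And>u v. norm (T u - T v) \<le> L * norm_inf (u - v)"
    using lip unfolding lipschitz_inf_def by blast
  have bdd: "bdd_above (f ` S)"
  proof (rule bdd_aboveI2)
    fix p assume "p \<in> S"
    then have "norm_inf (fst p - snd p) > 0"
      by (auto simp: S_def prod_eq_iff intro!: norm_inf_pos)
    then show "f p \<le> L"
      using L[of "fst p" "snd p"] by (simp add: f_def diff_quot_def pos_divide_le_eq)
  qed
  obtain x0 :: 'a where "x0 \<noteq> 0" using X by blast
  then have ne: "S \<noteq> {}" by (auto simp: S_def intro!: exI[of _ "((x0, 0), (0, 0))"])
  have "c < Sup (f ` S)"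
    using assms(3) by (simp add: lip_const_inf_def S_def f_def diff_quot_def)
  then obtain p where "p \<in> S" "c < f p"
    using less_cSUP_iff[OF ne bdd] by blast
  then show ?thesis by (intro exI[of _ "fst p"] exI[of _ "snd p"]) (auto simp: S_def f_def)
qed

theorem lemma4p2:
  fixes T :: "'a::banach \<times> 'b::banach \<Rightarrow> 'c::banach"
  assumes X_nontriv: "\<exists>x::'a. x \<noteq> 0"
    and lip: "lipschitz_inf T"
    and T0: "T (0, 0) = 0"
    and eps: "\<epsilon> > 0"
  shows "\<exists>x1 y1 x2 y2. (x1, y1) \<noteq> (x2, y2)
           \<and> norm_inf ((x1, y1) - (x2, y2)) = norm (x1 - x2)
           \<and> norm (T (x1, y1) - T (x2, y2)) \<ge> (lip_const_inf T - \<epsilon>) * norm_inf ((x1, y1) - (x2, y2))"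
proof -
  obtain u v where "u \<noteq> v" and near: "lip_const_inf T - \<epsilon> < diff_quot T u v"
    using lip_const_inf_approx[OF X_nontriv lip, of "lip_const_inf T - \<epsilon>"] eps by auto
  then obtain u' v' where uv': "u' \<noteq> v'" "x_dominated (u' - v')"
      and "diff_quot T u' v' \<ge> diff_quot T u v"
    using diff_quot_x_dominated_pair[OF X_nontriv] by blast
  with near have "lip_const_inf T - \<epsilon> \<le> norm (T u' - T v') / norm_inf (u' - v')"
    by (simp add: diff_quot_def)
  moreover have "norm_inf (u' - v') > 0"
    using uv'(1) by (intro norm_inf_pos) simp
  ultimately have "(lip_const_inf T - \<epsilon>) * norm_inf (u' - v') \<le> norm (T u' - T v')"
    by (simp add: pos_le_divide_eq)
  then show ?thesis
    using uv' by (intro exI[of _ "fst u'"] exI[of _ "snd u'"] exI[of _ "fst v'"] exI[of _ "snd v'"])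
      (simp add: x_dominated_def)
qed

end
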